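(* Let $\mathcal{H}$ be a Hilbert space, $K(\mathcal{H})$ the $C^*$-algebra of compact operators on $\mathcal{H}$, and $\mathcal{E}$ a Hilbert $K(\mathcal{H})$-module of (orthogonal) dimension one having the one-element orthonormal basis $\{y\}$ with $\langle y,y\rangle=\xi\otimes\xi$ for some unit vector $\xi\in\mathcal{H}$. Let $x,z\in\mathcal{E}$. If $x\parallel y$ and $y\parallel z$, then $x\parallel z$.
   Context: A (left) Hilbert $K(\mathcal{H})$-module is a left $K(\mathcal{H})$-module $\mathcal{E}$ with a $K(\mathcal{H})$-valued inner product $\langle\cdot,\cdot\rangle$, linear in the first variable and conjugate linear in the second, satisfying $\langle x,x\rangle\ge 0$ with equality iff $x=0$, $\langle ax,y\rangle = a\langle x,y\rangle$ and $\langle x,y\rangle^*=\langle y,x\rangle$, and complete for the norm $\|x\|=\|\langle x,x\rangle\|^{1/2}$. For $\xi,\eta\in\mathcal{H}$ (inner product $[\cdot,\cdot]$), $(\xi\otimes\eta)(\zeta)=[\zeta,\eta]\xi$. A system $\{x_\alpha\}_{\alpha\in\Lambda}\subset\mathcal{E}$ is orthonormal if $\|x_\alpha\|=1$, $\langle x_\alpha,x_\beta\rangle=0$ for $\alpha\ne\beta$, and each $\langle x_\alpha,x_\alpha\rangle$ is a minimal projection; it is an orthonormal basis if it generates a dense submodule of $\mathcal{E}$; the orthogonal dimension is the cardinality of an orthonormal basis. $x\parallel y$ (norm-parallel) means $\|x+\lambda y\|=\|x\|+\|y\|$ for some $\lambda\in\mathbb{C}$ with $|\lambda|=1$. *)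

theory Defs
  imports Complex_Main
begin

text \<open>A complex Hilbert space is modelled on a type 'h with its additive group
structure, a complex scalar multiplication smul and an inner product ip
(linear in the first variable, conjugate linear in the second).\<close>

definition hnorm :: "('h \<Rightarrow> 'h \<Rightarrow> complex) \<Rightarrow> 'h \<Rightarrow> real" where
  "hnorm ip v = sqrt (Re (ip v v))"

definition hilbert_space ::
  "(complex \<Rightarrow> 'h::ab_group_add \<Rightarrow> 'h) \<Rightarrow> ('h \<Rightarrow> 'h \<Rightarrow> complex) \<Rightarrow> bool" where
  "hilbert_space smul ip \<longleftrightarrow>
     (\<forall>v. smul 1 v = v) \<and>
     (\<forall>a b v. smul (a * b) v = smul a (smul b v)) \<and>
     (\<forall>a b v. smul (a + b) v = smul a v + smul b v) \<and>
     (\<forall>a u v. smul a (u + v) = smul a u + smul a v) \<and>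
     (\<forall>u v w. ip (u + v) w = ip u w + ip v w) \<and>
     (\<forall>c u w. ip (smul c u) w = c * ip u w) \<and>
     (\<forall>u v. ip u v = cnj (ip v u)) \<and>
     (\<forall>v. Re (ip v v) \<ge> 0) \<and>
     (\<forall>v. ip v v = 0 \<longrightarrow> v = 0) \<and>
     (\<forall>X::nat \<Rightarrow> 'h. (\<forall>e>0. \<exists>N. \<forall>m\<ge>N. \<forall>n\<ge>N. hnorm ip (X m - X n) < e) \<longrightarrow>
        (\<exists>L. \<forall>e>0. \<exists>N. \<forall>n\<ge>N. hnorm ip (X n - L) < e))"

definition hlinear :: "(complex \<Rightarrow> 'h::ab_group_add \<Rightarrow> 'h) \<Rightarrow> ('h \<Rightarrow> 'h) \<Rightarrow> bool" where
  "hlinear smul T \<longleftrightarrow> (\<forall>u v. T (u + v) = T u + T v) \<and> (\<forall>c v. T (smul c v) = smul c (T v))"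

text \<open>Compact operator: linear, and the image of the closed unit ball is relatively
compact, i.e. (H being complete) totally bounded.\<close>
definition compact_op ::
  "(complex \<Rightarrow> 'h::ab_group_add \<Rightarrow> 'h) \<Rightarrow> ('h \<Rightarrow> 'h \<Rightarrow> complex) \<Rightarrow> ('h \<Rightarrow> 'h) \<Rightarrow> bool" where
  "compact_op smul ip T \<longleftrightarrow> hlinear smul T \<and>
     (\<forall>e>0. \<exists>F. finite F \<and> (\<forall>v. hnorm ip v \<le> 1 \<longrightarrow> (\<exists>w\<in>F. hnorm ip (T v - w) < e)))"

definition opnorm :: "('h \<Rightarrow> 'h \<Rightarrow> complex) \<Rightarrow> ('h \<Rightarrow> 'h) \<Rightarrow> real" where
  "opnorm ip T = Sup {hnorm ip (T v) | v. hnorm ip v \<le> 1}"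

definition is_adjoint :: "('h \<Rightarrow> 'h \<Rightarrow> complex) \<Rightarrow> ('h \<Rightarrow> 'h) \<Rightarrow> ('h \<Rightarrow> 'h) \<Rightarrow> bool" where
  "is_adjoint ip S T \<longleftrightarrow> (\<forall>u v. ip (T u) v = ip u (S v))"

definition op_positive :: "('h \<Rightarrow> 'h \<Rightarrow> complex) \<Rightarrow> ('h \<Rightarrow> 'h) \<Rightarrow> bool" where
  "op_positive ip T \<longleftrightarrow> (\<forall>v. Im (ip (T v) v) = 0 \<and> Re (ip (T v) v) \<ge> 0)"

definition is_projection ::
  "(complex \<Rightarrow> 'h::ab_group_add \<Rightarrow> 'h) \<Rightarrow> ('h \<Rightarrow> 'h \<Rightarrow> complex) \<Rightarrow> ('h \<Rightarrow> 'h) \<Rightarrow> bool" where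
  "is_projection smul ip p \<longleftrightarrow> compact_op smul ip p \<and> p \<circ> p = p \<and> is_adjoint ip p p"

definition minimal_projection ::
  "(complex \<Rightarrow> 'h::ab_group_add \<Rightarrow> 'h) \<Rightarrow> ('h \<Rightarrow> 'h \<Rightarrow> complex) \<Rightarrow> ('h \<Rightarrow> 'h) \<Rightarrow> bool" where
  "minimal_projection smul ip p \<longleftrightarrow> is_projection smul ip p \<and> p \<noteq> (\<lambda>_. 0) \<and>
     (\<forall>q. is_projection smul ip q \<and> op_positive ip (\<lambda>v. p v - q v) \<longrightarrow> q = (\<lambda>_. 0) \<or> q = p)"

definition tensor ::
  "(complex \<Rightarrow> 'h \<Rightarrow> 'h) \<Rightarrow> ('h \<Rightarrow> 'h \<Rightarrow> complex) \<Rightarrow> 'h \<Rightarrow> 'h \<Rightarrow> ('h \<Rightarrow> 'h)" where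
  "tensor smul ip xi eta = (\<lambda>zeta. smul (ip zeta eta) xi)"

definition enorm :: "('h \<Rightarrow> 'h \<Rightarrow> complex) \<Rightarrow> ('e \<Rightarrow> 'e \<Rightarrow> ('h \<Rightarrow> 'h)) \<Rightarrow> 'e \<Rightarrow> real" where
  "enorm ip eip x = sqrt (opnorm ip (eip x x))"

text \<open>Left Hilbert K(H)-module on type 'e: complex scalar multiplication esmul,
left action act of compact operators, K(H)-valued inner product eip.\<close>
definition hilbert_KH_module ::
  "(complex \<Rightarrow> 'h::ab_group_add \<Rightarrow> 'h) \<Rightarrow> ('h \<Rightarrow> 'h \<Rightarrow> complex) \<Rightarrow>
   (complex \<Rightarrow> 'e::ab_group_add \<Rightarrow> 'e) \<Rightarrow> (('h \<Rightarrow> 'h) \<Rightarrow> 'e \<Rightarrow> 'e) \<Rightarrow>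
   ('e \<Rightarrow> 'e \<Rightarrow> ('h \<Rightarrow> 'h)) \<Rightarrow> bool" where
  "hilbert_KH_module smul ip esmul act eip \<longleftrightarrow>
     \<comment> \<open>complex vector space\<close>
     (\<forall>x. esmul 1 x = x) \<and>
     (\<forall>a b x. esmul (a * b) x = esmul a (esmul b x)) \<and>
     (\<forall>a b x. esmul (a + b) x = esmul a x + esmul b x) \<and>
     (\<forall>a x y. esmul a (x + y) = esmul a x + esmul a y) \<and>
     \<comment> \<open>left K(H)-module, compatible with scalars\<close>
     (\<forall>a x y. compact_op smul ip a \<longrightarrow> act a (x + y) = act a x + act a y) \<and>
     (\<forall>a b x. compact_op smul ip a \<and> compact_op smul ip b \<longrightarrow>
        act (\<lambda>v. a v + b v) x = act a x + act b x) \<and>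
     (\<forall>a b x. compact_op smul ip a \<and> compact_op smul ip b \<longrightarrow> act (a \<circ> b) x = act a (act b x)) \<and>
     (\<forall>c a x. compact_op smul ip a \<longrightarrow>
        act (\<lambda>v. smul c (a v)) x = esmul c (act a x) \<and> act a (esmul c x) = esmul c (act a x)) \<and>
     \<comment> \<open>K(H)-valued inner product\<close>
     (\<forall>x y. compact_op smul ip (eip x y)) \<and>
     (\<forall>x x' y. eip (x + x') y = (\<lambda>v. eip x y v + eip x' y v)) \<and>
     (\<forall>c x y. eip (esmul c x) y = (\<lambda>v. smul c (eip x y v))) \<and>
     (\<forall>a x y. compact_op smul ip a \<longrightarrow> eip (act a x) y = a \<circ> eip x y) \<and>
     (\<forall>x y. is_adjoint ip (eip y x) (eip x y)) \<and>
     (\<forall>x. op_positive ip (eip x x)) \<and>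
     (\<forall>x. eip x x = (\<lambda>_. 0) \<longleftrightarrow> x = 0) \<and>
     \<comment> \<open>completeness w.r.t. the norm\<close>
     (\<forall>X::nat \<Rightarrow> 'e. (\<forall>e>0. \<exists>N. \<forall>m\<ge>N. \<forall>n\<ge>N. enorm ip eip (X m - X n) < e) \<longrightarrow>
        (\<exists>L. \<forall>e>0. \<exists>N. \<forall>n\<ge>N. enorm ip eip (X n - L) < e))"

definition is_submodule ::
  "(complex \<Rightarrow> 'h::ab_group_add \<Rightarrow> 'h) \<Rightarrow> ('h \<Rightarrow> 'h \<Rightarrow> complex) \<Rightarrow>
   (complex \<Rightarrow> 'e::ab_group_add \<Rightarrow> 'e) \<Rightarrow> (('h \<Rightarrow> 'h) \<Rightarrow> 'e \<Rightarrow> 'e) \<Rightarrow> 'e set \<Rightarrow> bool" where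
  "is_submodule smul ip esmul act M \<longleftrightarrow> 0 \<in> M \<and>
     (\<forall>x\<in>M. \<forall>y\<in>M. x + y \<in> M) \<and> (\<forall>c. \<forall>x\<in>M. esmul c x \<in> M) \<and>
     (\<forall>a. \<forall>x\<in>M. compact_op smul ip a \<longrightarrow> act a x \<in> M)"

definition generated_submodule ::
  "(complex \<Rightarrow> 'h::ab_group_add \<Rightarrow> 'h) \<Rightarrow> ('h \<Rightarrow> 'h \<Rightarrow> complex) \<Rightarrow>
   (complex \<Rightarrow> 'e::ab_group_add \<Rightarrow> 'e) \<Rightarrow> (('h \<Rightarrow> 'h) \<Rightarrow> 'e \<Rightarrow> 'e) \<Rightarrow> 'e set \<Rightarrow> 'e set" where
  "generated_submodule smul ip esmul act S =
     \<Inter> {M. is_submodule smul ip esmul act M \<and> S \<subseteq> M}"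

definition orthonormal_system ::
  "(complex \<Rightarrow> 'h::ab_group_add \<Rightarrow> 'h) \<Rightarrow> ('h \<Rightarrow> 'h \<Rightarrow> complex) \<Rightarrow>
   ('e \<Rightarrow> 'e \<Rightarrow> ('h \<Rightarrow> 'h)) \<Rightarrow> 'e set \<Rightarrow> bool" where
  "orthonormal_system smul ip eip S \<longleftrightarrow>
     (\<forall>x\<in>S. enorm ip eip x = 1 \<and> minimal_projection smul ip (eip x x)) \<and>
     (\<forall>x\<in>S. \<forall>y\<in>S. x \<noteq> y \<longrightarrow> eip x y = (\<lambda>_. 0))"

definition orthonormal_basis ::
  "(complex \<Rightarrow> 'h::ab_group_add \<Rightarrow> 'h) \<Rightarrow> ('h \<Rightarrow> 'h \<Rightarrow> complex) \<Rightarrow>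
   (complex \<Rightarrow> 'e::ab_group_add \<Rightarrow> 'e) \<Rightarrow> (('h \<Rightarrow> 'h) \<Rightarrow> 'e \<Rightarrow> 'e) \<Rightarrow>
   ('e \<Rightarrow> 'e \<Rightarrow> ('h \<Rightarrow> 'h)) \<Rightarrow> 'e set \<Rightarrow> bool" where
  "orthonormal_basis smul ip esmul act eip S \<longleftrightarrow> orthonormal_system smul ip eip S \<and>
     (\<forall>x. \<forall>e>0. \<exists>w\<in>generated_submodule smul ip esmul act S. enorm ip eip (x - w) < e)"

definition norm_parallel ::
  "('h \<Rightarrow> 'h \<Rightarrow> complex) \<Rightarrow> (complex \<Rightarrow> 'e::ab_group_add \<Rightarrow> 'e) \<Rightarrow>
   ('e \<Rightarrow> 'e \<Rightarrow> ('h \<Rightarrow> 'h)) \<Rightarrow> 'e \<Rightarrow> 'e \<Rightarrow> bool" where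
  "norm_parallel ip esmul eip x y \<longleftrightarrow>
     (\<exists>l. cmod l = 1 \<and> enorm ip eip (x + esmul l y) = enorm ip eip x + enorm ip eip y)"

end

theory Submission
  imports Defs
begin

text \<open>Since \<open>\<langle>y, y\<rangle> = \<xi> \<otimes> \<xi>\<close>, the difference \<open>x - \<langle>x, y\<rangle> y\<close> is orthogonal to \<open>y\<close>, hence to the
dense submodule generated by \<open>y\<close>, hence zero. So \<open>\<langle>x, x\<rangle> = \<Phi> x \<otimes> \<Phi> x\<close> with \<open>\<Phi> x = \<langle>x, y\<rangle> \<xi>\<close>,
i.e. \<open>\<Phi>\<close> is a linear isometry of \<open>\<E>\<close> into \<open>\<H>\<close> with \<open>\<Phi> y = \<xi>\<close>, and norm-parallelism in \<open>\<E>\<close>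
is norm-parallelism of the images in \<open>\<H>\<close>. In the strictly convex space \<open>\<H>\<close>, \<open>u \<parallel> \<xi>\<close> for a unit
vector \<open>\<xi>\<close> forces \<open>u = \<parallel>u\<parallel> \<lambda> \<xi>\<close> with \<open>\<bar>\<lambda>\<bar> = 1\<close>; thus \<open>x \<parallel> y\<close> and \<open>y \<parallel> z\<close> put \<open>\<Phi> x\<close> and \<open>\<Phi> z\<close>
on the complex line through \<open>\<xi>\<close>, where any two vectors are parallel.\<close>

locale complex_pre_hilbert = module smul
  for smul :: "complex \<Rightarrow> 'h::ab_group_add \<Rightarrow> 'h" +
  fixes ip :: "'h \<Rightarrow> 'h \<Rightarrow> complex"
  assumes ip_add_left: "ip (u + v) w = ip u w + ip v w"
    and ip_scale_left: "ip (smul c u) w = c * ip u w"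
    and ip_cnj: "ip u v = cnj (ip v u)"
    and ip_self_Re_nonneg: "0 \<le> Re (ip v v)"
    and ip_self_eq_0: "ip v v = 0 \<Longrightarrow> v = 0"

lemma hilbert_space_imp_complex_pre_hilbert:
  assumes "hilbert_space smul ip"
  shows "complex_pre_hilbert smul ip"
  using assms unfolding hilbert_space_def
  by unfold_locales (elim conjE; metis)+

context complex_pre_hilbert
begin

lemma ip_add_right: "ip u (v + w) = ip u v + ip u w"
  by (metis ip_add_left ip_cnj complex_cnj_add)

lemma ip_scale_right: "ip u (smul c v) = cnj c * ip u v"
  by (metis ip_scale_left ip_cnj complex_cnj_mult)

lemma ip_zero_left [simp]: "ip 0 w = 0"
  and ip_diff_left: "ip (u - v) w = ip u w - ip v w"
proof -
  interpret additive "\<lambda>u. ip u w" by standard (rule ip_add_left)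
  show "ip 0 w = 0" by (rule zero)
  show "ip (u - v) w = ip u w - ip v w" by (rule diff)
qed

lemma ip_zero_right [simp]: "ip u 0 = 0"
  and ip_diff_right: "ip u (v - w) = ip u v - ip u w"
proof -
  interpret additive "\<lambda>v. ip u v" by standard (rule ip_add_right)
  show "ip u 0 = 0" by (rule zero)
  show "ip u (v - w) = ip u v - ip u w" by (rule diff)
qed

lemma hnorm_nonneg: "0 \<le> hnorm ip v"
  by (simp add: hnorm_def ip_self_Re_nonneg)

lemma hnorm_square: "hnorm ip v ^ 2 = Re (ip v v)"
  by (simp add: hnorm_def ip_self_Re_nonneg)

lemma ip_self: "ip v v = of_real (hnorm ip v ^ 2)"
proof -
  have "Im (ip v v) = 0"
    using arg_cong[OF ip_cnj[of v v], of Im] by simp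
  then show ?thesis
    by (simp add: hnorm_square complex_eq_iff)
qed

lemma hnorm_zero [simp]: "hnorm ip 0 = 0"
  by (simp add: hnorm_def)

lemma hnorm_eq_0_iff [simp]: "hnorm ip v = 0 \<longleftrightarrow> v = 0"
  using ip_self[of v] ip_self_eq_0[of v] by auto

lemma hnorm_pos_iff [simp]: "0 < hnorm ip v \<longleftrightarrow> v \<noteq> 0"
  using hnorm_nonneg[of v] hnorm_eq_0_iff[of v] by linarith

lemma hnorm_scale: "hnorm ip (smul c v) = cmod c * hnorm ip v"
proof -
  have "of_real (hnorm ip (smul c v) ^ 2) = ip (smul c v) (smul c v)"
    by (rule ip_self[symmetric])
  also have "\<dots> = (c * cnj c) * ip v v"
    by (simp add: ip_scale_left ip_scale_right)
  also have "\<dots> = of_real ((cmod c * hnorm ip v) ^ 2)"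
    by (simp add: ip_self power_mult_distrib flip: complex_norm_square)
  finally show ?thesis
    by (simp add: hnorm_nonneg power2_eq_iff_nonneg del: of_real_power)
qed

lemma hnorm_add_square:
  "hnorm ip (u + v) ^ 2 = hnorm ip u ^ 2 + 2 * Re (ip u v) + hnorm ip v ^ 2"
  using arg_cong[OF ip_cnj[of v u], of Re]
  by (simp add: hnorm_square ip_add_left ip_add_right)

lemma cauchy_schwarz: "cmod (ip u v) \<le> hnorm ip u * hnorm ip v"
proof (cases "v = 0")
  case False
  define N where "N = hnorm ip v ^ 2"
  have "N > 0"
    using False by (simp add: N_def)
  define s where "s = ip u v"
  define t where "t = s / of_real N"
  \<comment> \<open>expand \<open>0 \<le> \<langle>u - t v, u - t v\<rangle>\<close> for the optimal \<open>t\<close>\<close>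
  have "ip (u - smul t v) (u - smul t v) = ip u u - cnj t * s - t * cnj s + t * cnj t * N"
    by (simp add: s_def N_def ip_diff_left ip_diff_right ip_scale_left ip_scale_right ip_self[of v]
        algebra_simps ip_cnj[of v u])
  also have "\<dots> = ip u u - of_real (cmod s ^ 2 / N)"
    using \<open>N > 0\<close> complex_norm_square[of s]
    by (simp add: t_def field_simps power2_eq_square)
  finally have "cmod s ^ 2 / N \<le> hnorm ip u ^ 2"
    using ip_self_Re_nonneg[of "u - smul t v"] by (simp add: hnorm_square)
  then have "cmod s ^ 2 \<le> (hnorm ip u * hnorm ip v) ^ 2"
    using \<open>N > 0\<close> by (simp add: N_def field_simps power_mult_distrib)
  then show ?thesis
    unfolding s_def by (meson hnorm_nonneg mult_nonneg_nonneg power2_le_imp_le)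
qed simp

lemma hnorm_triangle: "hnorm ip (u + v) \<le> hnorm ip u + hnorm ip v"
proof -
  have "Re (ip u v) \<le> hnorm ip u * hnorm ip v"
    using cauchy_schwarz[of u v] complex_Re_le_cmod order_trans by blast
  then have "hnorm ip (u + v) ^ 2 \<le> (hnorm ip u + hnorm ip v) ^ 2"
    by (simp add: hnorm_add_square power2_sum)
  then show ?thesis
    by (meson add_nonneg_nonneg hnorm_nonneg power2_le_imp_le)
qed

lemma hnorm_add_eq_imp_scale:
  assumes "hnorm ip (u + v) = hnorm ip u + hnorm ip v" and "hnorm ip v = 1"
  shows "u = smul (of_real (hnorm ip u)) v"
proof -
  define a where "a = hnorm ip u"
  have "Re (ip u v) = a"
    using hnorm_add_square[of u v] assms by (simp add: a_def power2_sum)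
  then have "ip (u - smul a v) (u - smul a v) = 0"
    using assms(2) ip_cnj[of v u]
    by (simp add: ip_diff_left ip_diff_right ip_scale_left ip_scale_right ip_self[of u] ip_self[of v]
        a_def complex_eq_iff power2_eq_square)
  then have "u - smul a v = 0"
    by (rule ip_self_eq_0)
  then show ?thesis
    by (simp add: a_def)
qed

lemma adjoint_unique:
  assumes "is_adjoint ip S T" and "is_adjoint ip S' T"
  shows "S = S'"
proof
  fix v
  have "ip u (S v - S' v) = 0" for u
    using assms by (simp add: is_adjoint_def ip_diff_right)
  then show "S v = S' v"
    using ip_self_eq_0[of "S v - S' v"] by simp
qed

lemma compact_op_linear: "compact_op smul ip T \<Longrightarrow> module_hom smul smul T"
  unfolding compact_op_def hlinear_def module_hom_def module_hom_axioms_def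
  using module_axioms by blast

lemma compact_op_zero: "compact_op smul ip T \<Longrightarrow> T 0 = 0"
  using module_hom.zero[OF compact_op_linear] .

lemma compact_op_bdd_above:
  assumes "compact_op smul ip T"
  shows "bdd_above {hnorm ip (T v) | v. hnorm ip v \<le> 1}"
proof -
  obtain F where "finite F" and F: "\<forall>v. hnorm ip v \<le> 1 \<longrightarrow> (\<exists>w\<in>F. hnorm ip (T v - w) < 1)"
    using assms unfolding compact_op_def by (meson zero_less_one)
  show ?thesis
  proof (rule bdd_aboveI)
    fix r assume "r \<in> {hnorm ip (T v) | v. hnorm ip v \<le> 1}"
    then obtain v w where "r = hnorm ip (T v)" "w \<in> F" "hnorm ip (T v - w) < 1"
      using F by blast
    moreover have "hnorm ip (T v) \<le> hnorm ip (T v - w) + hnorm ip w"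
      using hnorm_triangle[of "T v - w" w] by simp
    moreover have "hnorm ip w \<le> (\<Sum>w\<in>F. hnorm ip w)"
      using \<open>finite F\<close> \<open>w \<in> F\<close> by (simp add: member_le_sum hnorm_nonneg)
    ultimately show "r \<le> 1 + (\<Sum>w\<in>F. hnorm ip w)"
      by linarith
  qed
qed

lemma hnorm_le_opnorm:
  "compact_op smul ip T \<Longrightarrow> hnorm ip v \<le> 1 \<Longrightarrow> hnorm ip (T v) \<le> opnorm ip T"
  unfolding opnorm_def by (rule cSup_upper) (auto intro: compact_op_bdd_above)

lemma Re_ip_le_opnorm:
  assumes "compact_op smul ip T" and "hnorm ip v \<le> 1"
  shows "Re (ip (T v) v) \<le> opnorm ip T"
proof -
  have "Re (ip (T v) v) \<le> hnorm ip (T v) * hnorm ip v"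
    using cauchy_schwarz complex_Re_le_cmod order_trans by blast
  also have "\<dots> \<le> hnorm ip (T v)"
    using assms(2) hnorm_nonneg[of "T v"] by (simp add: mult_left_le)
  also have "\<dots> \<le> opnorm ip T"
    using assms by (rule hnorm_le_opnorm)
  finally show ?thesis .
qed

lemma opnorm_tensor_self: "opnorm ip (tensor smul ip e e) = hnorm ip e ^ 2"
  unfolding opnorm_def tensor_def
proof (rule cSup_eq_maximum)
  show "hnorm ip e ^ 2 \<in> {hnorm ip (smul (ip v e) e) | v. hnorm ip v \<le> 1}"
  proof (cases "e = 0")
    case False
    define n where "n = hnorm ip e"
    have "n > 0"
      using False by (simp add: n_def)
    define v where "v = smul (of_real (1 / n)) e"
    have "hnorm ip v = 1"
      using \<open>n > 0\<close> by (simp add: v_def hnorm_scale n_def norm_divide hnorm_nonneg)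
    moreover have "ip v e = of_real n"
      using \<open>n > 0\<close> by (simp add: v_def ip_scale_left ip_self n_def power2_eq_square)
    ultimately show ?thesis
      using \<open>n > 0\<close> by (auto simp: hnorm_scale n_def power2_eq_square hnorm_nonneg intro!: exI[of _ v])
  qed (auto intro!: exI[of _ 0])
next
  fix r assume "r \<in> {hnorm ip (smul (ip v e) e) | v. hnorm ip v \<le> 1}"
  then obtain v where "r = cmod (ip v e) * hnorm ip e" and "hnorm ip v \<le> 1"
    by (auto simp: hnorm_scale)
  moreover have "cmod (ip v e) \<le> hnorm ip e"
    using cauchy_schwarz[of v e] \<open>hnorm ip v \<le> 1\<close> hnorm_nonneg[of e]
    by (meson mult_left_le_one_le order_trans hnorm_nonneg)
  ultimately show "r \<le> hnorm ip e ^ 2"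
    by (simp add: power2_eq_square hnorm_nonneg mult_right_mono)
qed

lemma quadratic_form_eq_0_imp_zero:
  assumes "module_hom smul smul A" and q: "\<And>v. ip (A v) v = 0"
  shows "A = (\<lambda>_. 0)"
proof
  interpret A: module_hom smul smul A by (fact assms(1))
  fix u
  \<comment> \<open>polarization\<close>
  have pol: "cnj c * ip (A u) v + c * ip (A v) u = 0" for c v
    using q[of "u + smul c v"] q[of u] q[of v]
    by (simp add: A.add A.scale ip_add_left ip_add_right ip_scale_left ip_scale_right algebra_simps)
  have "ip (A u) (A u) = 0"
    using pol[of 1 "A u"] pol[of "\<i>" "A u"] by (simp add: algebra_simps)
  then show "A u = 0"
    by (rule ip_self_eq_0)
qed

lemma positive_op_eq_0:
  assumes "module_hom smul smul A" and "op_positive ip A"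
    and le: "\<And>v. hnorm ip v \<le> 1 \<Longrightarrow> Re (ip (A v) v) \<le> 0"
  shows "A = (\<lambda>_. 0)"
proof (rule quadratic_form_eq_0_imp_zero[OF assms(1)])
  interpret A: module_hom smul smul A by (fact assms(1))
  fix v
  show "ip (A v) v = 0"
  proof (cases "v = 0")
    case False
    define n where "n = hnorm ip v"
    have "n > 0"
      using False by (simp add: n_def)
    define v' where "v' = smul (of_real (1 / n)) v"
    have "hnorm ip v' = 1"
      using \<open>n > 0\<close> by (simp add: v'_def hnorm_scale n_def norm_divide hnorm_nonneg)
    then have "ip (A v') v' = 0"
      using le[of v'] \<open>op_positive ip A\<close>
      by (simp add: op_positive_def complex_eq_iff order_antisym)
    moreover have "ip (A v') v' = of_real (1 / n ^ 2) * ip (A v) v"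
      by (simp add: v'_def A.scale ip_scale_left ip_scale_right power2_eq_square)
    ultimately show ?thesis
      using \<open>n > 0\<close> by simp
  qed simp
qed

definition parallel :: "'h \<Rightarrow> 'h \<Rightarrow> bool" where
  "parallel u v \<longleftrightarrow> (\<exists>l. cmod l = 1 \<and> hnorm ip (u + smul l v) = hnorm ip u + hnorm ip v)"

lemma unimodular_mult_cnj: "cmod l = 1 \<Longrightarrow> l * cnj l = 1"
  using complex_norm_square[of l] by simp

lemma parallel_sym: "parallel u v \<Longrightarrow> parallel v u"
proof -
  assume "parallel u v"
  then obtain l where l: "cmod l = 1" "hnorm ip (u + smul l v) = hnorm ip u + hnorm ip v"
    unfolding parallel_def by blast
  have "hnorm ip (v + smul (cnj l) u) = hnorm ip (smul l (v + smul (cnj l) u))"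
    using l(1) by (simp add: hnorm_scale)
  also have "\<dots> = hnorm ip (u + smul l v)"
    using unimodular_mult_cnj[OF l(1)] by (simp add: scale_right_distrib add.commute)
  finally show "parallel v u"
    unfolding parallel_def using l by (intro exI[of _ "cnj l"]) simp
qed

lemma parallel_unit_imp_scale:
  assumes "hnorm ip e = 1" and "parallel u e"
  obtains l where "cmod l = 1" and "u = smul (of_real (hnorm ip u) * l) e"
proof -
  obtain l where l: "cmod l = 1" "hnorm ip (u + smul l e) = hnorm ip u + hnorm ip e"
    using assms(2) unfolding parallel_def by blast
  have "hnorm ip (smul l e) = 1"
    using l(1) assms(1) by (simp add: hnorm_scale)
  then have "u = smul (of_real (hnorm ip u)) (smul l e)"
    using l(2) assms(1) by (intro hnorm_add_eq_imp_scale) simp_all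
  with l(1) that show ?thesis
    by simp
qed

lemma parallel_trans_unit:
  assumes "hnorm ip e = 1" and "parallel u e" and "parallel e v"
  shows "parallel u v"
proof -
  define a b where "a = hnorm ip u" and "b = hnorm ip v"
  obtain l1 where l1: "cmod l1 = 1" and u: "u = smul (of_real a * l1) e"
    using parallel_unit_imp_scale[OF assms(1,2)] unfolding a_def .
  obtain l2 where l2: "cmod l2 = 1" and v: "v = smul (of_real b * l2) e"
    using parallel_unit_imp_scale[OF assms(1) parallel_sym[OF assms(3)]] unfolding b_def .
  \<comment> \<open>rotating \<open>v\<close> by \<open>l1 cnj l2\<close> lines it up with \<open>u\<close>\<close>
  have rotate: "l1 * cnj l2 * (of_real b * l2) = l1 * of_real b"
    using unimodular_mult_cnj[OF l2(1)] by algebra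
  have "u + smul (l1 * cnj l2) v = smul (l1 * of_real (a + b)) e"
    unfolding u v scale_scale rotate by (simp add: algebra_simps flip: scale_left_distrib)
  then have "hnorm ip (u + smul (l1 * cnj l2) v) = hnorm ip u + hnorm ip v"
    using l1(1) assms(1)
    by (simp add: hnorm_scale norm_mult a_def b_def hnorm_nonneg del: of_real_add)
  moreover have "cmod (l1 * cnj l2) = 1"
    using l1(1) l2(1) by (simp add: norm_mult)
  ultimately show ?thesis
    unfolding parallel_def by blast
qed

end

locale pre_hilbert_KH_module = complex_pre_hilbert smul ip
  for smul :: "complex \<Rightarrow> 'h::ab_group_add \<Rightarrow> 'h" and ip +
  fixes esmul :: "complex \<Rightarrow> 'e::ab_group_add \<Rightarrow> 'e"
    and act :: "('h \<Rightarrow> 'h) \<Rightarrow> 'e \<Rightarrow> 'e"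
    and eip :: "'e \<Rightarrow> 'e \<Rightarrow> ('h \<Rightarrow> 'h)"
  assumes eip_compact: "compact_op smul ip (eip x y)"
    and eip_add_left: "eip (x + x') y = (\<lambda>v. eip x y v + eip x' y v)"
    and eip_scale_left: "eip (esmul c x) y = (\<lambda>v. smul c (eip x y v))"
    and eip_act_left: "compact_op smul ip a \<Longrightarrow> eip (act a x) y = a \<circ> eip x y"
    and eip_adjoint: "is_adjoint ip (eip y x) (eip x y)"
    and eip_positive: "op_positive ip (eip x x)"
    and eip_self_eq_0: "eip x x = (\<lambda>_. 0) \<Longrightarrow> x = 0"

lemma hilbert_KH_module_imp_pre_hilbert_KH_module:
  assumes "hilbert_space smul ip" and "hilbert_KH_module smul ip esmul act eip"
  shows "pre_hilbert_KH_module smul ip esmul act eip"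
  using hilbert_space_imp_complex_pre_hilbert[OF assms(1)] assms(2)
  unfolding pre_hilbert_KH_module_def pre_hilbert_KH_module_axioms_def hilbert_KH_module_def
  by (elim conjE) (intro conjI; simp)

context pre_hilbert_KH_module
begin

lemma eip_zero_left [simp]: "eip 0 w = (\<lambda>_. 0)"
  using eip_add_left[of 0 0 w] by (simp add: fun_eq_iff)

lemma eip_diff_left: "eip (x - x') w = (\<lambda>v. eip x w v - eip x' w v)"
  using eip_add_left[of "x - x'" x' w] by (simp add: fun_eq_iff)

lemma eip_swap: "is_adjoint ip S (eip x w) \<Longrightarrow> eip w x = S"
  using adjoint_unique eip_adjoint by blast

lemma eip_eq_0_swap: "eip x w = (\<lambda>_. 0) \<Longrightarrow> eip w x = (\<lambda>_. 0)"
  by (rule eip_swap) (simp add: is_adjoint_def)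

lemma eip_diff_right: "eip w (u - u') = (\<lambda>v. eip w u v - eip w u' v)"
  by (rule eip_swap)
    (use eip_adjoint[of w u] eip_adjoint[of w u'] in
      \<open>simp add: is_adjoint_def eip_diff_left ip_diff_left ip_diff_right\<close>)

lemma orthogonal_submodule: "is_submodule smul ip esmul act {u. eip u w = (\<lambda>_. 0)}"
  unfolding is_submodule_def
  by (auto simp: eip_add_left eip_scale_left eip_act_left compact_op_zero fun_eq_iff)

lemma generated_submodule_orthogonal:
  assumes "\<forall>s\<in>S. eip s w = (\<lambda>_. 0)" and "u \<in> generated_submodule smul ip esmul act S"
  shows "eip u w = (\<lambda>_. 0)"
  using assms orthogonal_submodule unfolding generated_submodule_def by blast

lemma orthogonal_to_dense_eq_0:
  assumes orth: "\<forall>s\<in>S. eip s w = (\<lambda>_. 0)"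
    and dense: "\<forall>e>0. \<exists>u\<in>generated_submodule smul ip esmul act S. enorm ip eip (w - u) < e"
  shows "w = 0"
proof -
  have "eip w w = (\<lambda>_. 0)"
  proof (rule positive_op_eq_0)
    show "module_hom smul smul (eip w w)"
      by (rule compact_op_linear[OF eip_compact])
    show "op_positive ip (eip w w)"
      by (rule eip_positive)
    fix v assume v: "hnorm ip v \<le> 1"
    show "Re (ip (eip w w v) v) \<le> 0"
    proof (rule field_le_epsilon)
      fix e :: real assume "0 < e"
      then obtain u where u: "u \<in> generated_submodule smul ip esmul act S"
        and close: "enorm ip eip (w - u) < sqrt e"
        using dense by (meson real_sqrt_gt_zero)
      have "eip u w = (\<lambda>_. 0)"
        using orth u by (rule generated_submodule_orthogonal)
      then have "eip (w - u) (w - u) v = eip w w v + eip u u v"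
        using eip_eq_0_swap[of u w] by (simp add: eip_diff_left eip_diff_right)
      then have "Re (ip (eip w w v) v) \<le> Re (ip (eip (w - u) (w - u) v) v)"
        using eip_positive[of u] by (simp add: op_positive_def ip_add_left)
      also have "\<dots> \<le> opnorm ip (eip (w - u) (w - u))"
        using eip_compact v by (rule Re_ip_le_opnorm)
      also have "\<dots> < e"
        using close by (simp add: enorm_def)
      finally show "Re (ip (eip w w v) v) \<le> 0 + e"
        by simp
    qed
  qed
  then show "w = 0"
    by (rule eip_self_eq_0)
qed

end

locale rank_one_KH_module = pre_hilbert_KH_module smul ip esmul act eip
  for smul :: "complex \<Rightarrow> 'h::ab_group_add \<Rightarrow> 'h" and ip
    and esmul :: "complex \<Rightarrow> 'e::ab_group_add \<Rightarrow> 'e" and act eip +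
  fixes y :: 'e and xi :: 'h
  assumes dense: "\<forall>x. \<forall>e>0. \<exists>w\<in>generated_submodule smul ip esmul act {y}. enorm ip eip (x - w) < e"
    and xi_unit: "hnorm ip xi = 1"
    and eip_y_y: "eip y y = tensor smul ip xi xi"
begin

lemma eip_y_y_apply: "eip y y v = smul (ip v xi) xi"
  by (simp add: eip_y_y tensor_def)

lemma ip_xi_xi: "ip xi xi = 1"
  using ip_self[of xi] xi_unit by simp

lemma act_eip_y_y: "act (eip y y) y = y"
proof -
  define d where "d = y - act (eip y y) y"
  have "eip d y = (\<lambda>_. 0)"
    by (simp add: d_def eip_diff_left eip_act_left eip_compact eip_y_y_apply ip_scale_left ip_xi_xi)
  then have "eip y d = (\<lambda>_. 0)" and "eip (act (eip y y) y) d = (\<lambda>_. 0)"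
    using eip_eq_0_swap by (auto simp: eip_act_left eip_compact compact_op_zero fun_eq_iff)
  then have "eip d d = (\<lambda>_. 0)"
    using eip_diff_left[of y "act (eip y y) y" d] unfolding d_def[symmetric] by simp
  then have "d = 0"
    by (rule eip_self_eq_0)
  then show ?thesis
    by (simp add: d_def)
qed

lemma eip_comp_eip_y_y: "eip x y \<circ> eip y y = eip x y"
proof (rule eip_swap[symmetric])
  have "eip y x = eip y y \<circ> eip y x"
    using eip_act_left[OF eip_compact, of y y y x] by (simp add: act_eip_y_y)
  then show "is_adjoint ip (eip x y \<circ> eip y y) (eip y x)"
    using eip_adjoint[of y y] eip_adjoint[of x y] unfolding is_adjoint_def
    by (metis comp_apply)
qed

lemma eip_y_apply: "eip x y v = smul (ip v xi) (eip x y xi)"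
  using fun_cong[OF eip_comp_eip_y_y[of x], of v] module_hom.scale[OF compact_op_linear[OF eip_compact]]
  by (simp add: eip_y_y_apply)

definition coord :: "'e \<Rightarrow> 'h" where
  "coord x = eip x y xi"

lemma coord_y: "coord y = xi"
  by (simp add: coord_def eip_y_y_apply ip_xi_xi)

lemma coord_add_scale: "coord (x + esmul c z) = coord x + smul c (coord z)"
  by (simp add: coord_def eip_add_left eip_scale_left)

lemma eip_reconstruction: "act (eip x y) y = x"
proof -
  define w where "w = x - act (eip x y) y"
  have "eip w y = (\<lambda>_. 0)"
    using eip_comp_eip_y_y[of x]
    by (simp add: w_def eip_diff_left eip_act_left eip_compact fun_eq_iff)
  then have "\<forall>s\<in>{y}. eip s w = (\<lambda>_. 0)"
    using eip_eq_0_swap by blast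
  then have "w = 0"
    by (rule orthogonal_to_dense_eq_0) (use dense in blast)
  then show ?thesis
    by (simp add: w_def)
qed

lemma eip_self_eq_tensor: "eip x x = tensor smul ip (coord x) (coord x)"
proof
  fix t
  have "ip (eip y x t) xi = ip t (coord x)"
    using eip_adjoint[of x y] unfolding is_adjoint_def coord_def by (metis ip_cnj)
  moreover have "eip x x t = eip x y (eip y x t)"
    using eip_act_left[OF eip_compact, of x y y x] by (simp add: eip_reconstruction)
  ultimately show "eip x x t = tensor smul ip (coord x) (coord x) t"
    by (simp add: eip_y_apply[of x "eip y x t"] tensor_def coord_def)
qed

lemma enorm_eq_hnorm_coord: "enorm ip eip x = hnorm ip (coord x)"
  by (simp add: enorm_def eip_self_eq_tensor opnorm_tensor_self hnorm_nonneg)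

lemma norm_parallel_iff_parallel_coord:
  "norm_parallel ip esmul eip x z \<longleftrightarrow> parallel (coord x) (coord z)"
  by (simp add: norm_parallel_def parallel_def enorm_eq_hnorm_coord coord_add_scale)

end

theorem corollary2p6:
  fixes smul :: "complex \<Rightarrow> 'h::ab_group_add \<Rightarrow> 'h"
    and ip :: "'h \<Rightarrow> 'h \<Rightarrow> complex"
    and esmul :: "complex \<Rightarrow> 'e::ab_group_add \<Rightarrow> 'e"
    and act :: "('h \<Rightarrow> 'h) \<Rightarrow> 'e \<Rightarrow> 'e"
    and eip :: "'e \<Rightarrow> 'e \<Rightarrow> ('h \<Rightarrow> 'h)"
    and y x z :: 'e and xi :: 'h
  assumes "hilbert_space smul ip"
    and "hilbert_KH_module smul ip esmul act eip"
    and "orthonormal_basis smul ip esmul act eip {y}"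
    and "hnorm ip xi = 1"
    and "eip y y = tensor smul ip xi xi"
    and "norm_parallel ip esmul eip x y"
    and "norm_parallel ip esmul eip y z"
  shows "norm_parallel ip esmul eip x z"
proof -
  have "pre_hilbert_KH_module smul ip esmul act eip"
    using assms(1,2) by (rule hilbert_KH_module_imp_pre_hilbert_KH_module)
  moreover have "\<forall>x. \<forall>e>0. \<exists>w\<in>generated_submodule smul ip esmul act {y}. enorm ip eip (x - w) < e"
    using assms(3) unfolding orthonormal_basis_def by blast
  ultimately interpret rank_one_KH_module smul ip esmul act eip y xi
    using assms(4,5) by (simp add: rank_one_KH_module_def rank_one_KH_module_axioms_def)
  show ?thesis
    using assms(6,7) parallel_trans_unit[OF xi_unit]
    unfolding norm_parallel_iff_parallel_coord coord_y by blast
qed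

end
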